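(* Let $n\ge 2$ and let $G\le S_n$ be fusion controlled. Let $c_0(\mathcal T(G))$ be the number of connected components of $P_0(\mathcal T(G))$, and choose types $T_1,\dots,T_{c_0(\mathcal T(G))}\in\mathcal T(G_0)$ lying in pairwise distinct components, so that every component of $P_0(\mathcal T(G))$ is $C(T_i)$ for exactly one $i$. For each $i$ pick any connected component $C_i$ of $\widetilde P_0(G)$ containing at least one vertex of type $T_i$. Then $$c_0(G)=\sum_{i=1}^{c_0(\mathcal T(G))}\frac{\mu_{T_i}(G)}{\phi(o(T_i))\,k_{C_i}(T_i)}.$$
   Context: All graphs are finite and undirected; components are connected components. For a finite group $G$, $G_0=G\setminus\{1\}$. The proper power graph $P_0(G)$ has vertex set $G_0$, and distinct $x,y\in G_0$ are adjacent iff $x=y^m$ or $y=x^m$ for some $m\in\mathbb N$; $c_0(G)$ is its number of components. For $x\in G_0$ let $[x]=\{y\in G:\langle y\rangle=\langle x\rangle\}$. The proper quotient power graph $\widetilde P_0(G)$ has vertex set $\{[x]:x\in G_0\}$, distinct $[x],[y]$ being adjacent iff some $x'\in[x]$, $y'\in[y]$ are such that one is a positive power of the other. For $\psi\in S_n$ (acting on $\{1,\dots,n\}$), its type $T_\psi$ is the partition of $n$ given by the multiset of lengths of the orbits of $\langle\psi\rangle$ on $\{1,\dots,n\}$ (fixed points count as parts $1$); the type of $[\psi]$ is $T_\psi$ (well defined). A partition $T=[m_1^{t_1},\dots,m_k^{t_k}]$ (distinct parts $m_j$ with multiplicities $t_j$) has order $o(T)=\mathrm{lcm}(m_1,\dots,m_k)$,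 and for $a\in\mathbb N$ its power is $T^a=[(m_1/\gcd(a,m_1))^{t_1\gcd(a,m_1)},\dots,(m_k/\gcd(a,m_k))^{t_k\gcd(a,m_k)}]$ (so $T_{\psi^a}=(T_\psi)^a$). For $G\le S_n$, $\mathcal T(G_0)=\{T_\psi:\psi\in G_0\}$, and the proper power type graph $P_0(\mathcal T(G))$ has vertex set $\mathcal T(G_0)$, distinct $T,T'$ being adjacent iff one is a power of the other; $C(T)$ is its component containing $T$. $\mu_T(G)$ is the number of elements of $G$ of type $T$; $\phi$ is Euler's totient function; for a component $C$ of $\widetilde P_0(G)$, $k_C(T)$ is the number of vertices of $C$ of type $T$. $G\le S_n$ is fusion controlled if for every $\psi\in G$ and $x\in S_n$ with $x^{-1}\psi x\in G$ there exists $y\in N_{S_n}(G)$ with $x^{-1}\psi x=y^{-1}\psi y$. *)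

theory Defs
  imports "HOL-Algebra.Sym_Groups" "HOL-Number_Theory.Number_Theory" "HOL-Library.Multiset"
begin

type_synonym perm = "nat \<Rightarrow> nat"
type_synonym ptype = "nat multiset"   \<comment> \<open>a partition of n, as multiset of parts\<close>

definition conn_rel :: "'a set \<Rightarrow> ('a \<Rightarrow> 'a \<Rightarrow> bool) \<Rightarrow> ('a \<times> 'a) set" where
  "conn_rel V E = {(x, y). x \<in> V \<and> y \<in> V \<and>
      (x, y) \<in> ({(a, b). a \<in> V \<and> b \<in> V \<and> E a b})\<^sup>*}"

definition components :: "'a set \<Rightarrow> ('a \<Rightarrow> 'a \<Rightarrow> bool) \<Rightarrow> 'a set set" where
  "components V E = V // conn_rel V E"

definition component_of :: "'a set \<Rightarrow> ('a \<Rightarrow> 'a \<Rightarrow> bool) \<Rightarrow> 'a \<Rightarrow> 'a set" where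
  "component_of V E x = conn_rel V E `` {x}"

definition G0 :: "perm set \<Rightarrow> perm set" where
  "G0 G = G - {id}"

definition pow_adj :: "perm \<Rightarrow> perm \<Rightarrow> bool" where
  "pow_adj x y \<longleftrightarrow> x \<noteq> y \<and> (\<exists>m::nat. m > 0 \<and> (x = y ^^ m \<or> y = x ^^ m))"

definition c0 :: "perm set \<Rightarrow> nat" where
  "c0 G = card (components (G0 G) pow_adj)"

definition cyc :: "perm \<Rightarrow> perm set" where
  "cyc x = range (\<lambda>m::nat. x ^^ m)"

definition cls :: "perm set \<Rightarrow> perm \<Rightarrow> perm set" where
  "cls G x = {y \<in> G. cyc y = cyc x}"

definition qvert :: "perm set \<Rightarrow> perm set set" where
  "qvert G = cls G ` G0 G"

definition qadj :: "perm set \<Rightarrow> perm set \<Rightarrow> bool" where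
  "qadj X Y \<longleftrightarrow> X \<noteq> Y \<and> (\<exists>x\<in>X. \<exists>y\<in>Y. \<exists>m::nat. m > 0 \<and> (x = y ^^ m \<or> y = x ^^ m))"

definition orb :: "perm \<Rightarrow> nat \<Rightarrow> nat set" where
  "orb \<psi> i = range (\<lambda>m::nat. (\<psi> ^^ m) i)"

definition ptype_of :: "nat \<Rightarrow> perm \<Rightarrow> ptype" where
  "ptype_of n \<psi> = image_mset card (mset_set (orb \<psi> ` {1..n}))"

definition type_order :: "ptype \<Rightarrow> nat" where
  "type_order T = Lcm (set_mset T)"

definition type_pow :: "ptype \<Rightarrow> nat \<Rightarrow> ptype" where
  "type_pow T a = sum_mset (image_mset (\<lambda>m. replicate_mset (gcd a m) (m div gcd a m)) T)"

definition types0 :: "nat \<Rightarrow> perm set \<Rightarrow> ptype set" where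
  "types0 n G = ptype_of n ` G0 G"

definition type_adj :: "ptype \<Rightarrow> ptype \<Rightarrow> bool" where
  "type_adj T T' \<longleftrightarrow> T \<noteq> T' \<and> (\<exists>a::nat. a > 0 \<and> (T = type_pow T' a \<or> T' = type_pow T a))"

definition c0_types :: "nat \<Rightarrow> perm set \<Rightarrow> nat" where
  "c0_types n G = card (components (types0 n G) type_adj)"

definition type_comp :: "nat \<Rightarrow> perm set \<Rightarrow> ptype \<Rightarrow> ptype set" where
  "type_comp n G T = component_of (types0 n G) type_adj T"

definition mu :: "nat \<Rightarrow> ptype \<Rightarrow> perm set \<Rightarrow> nat" where
  "mu n T G = card {\<psi> \<in> G. ptype_of n \<psi> = T}"

definition kC :: "nat \<Rightarrow> perm set set \<Rightarrow> ptype \<Rightarrow> nat" where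
  "kC n C T = card {X \<in> C. \<exists>\<psi>\<in>X. ptype_of n \<psi> = T}"

definition normalizer_S :: "nat \<Rightarrow> perm set \<Rightarrow> perm set" where
  "normalizer_S n G = {y. y permutes {1..n} \<and> (\<lambda>g. inv' y \<circ> g \<circ> y) ` G = G}"

definition fusion_controlled :: "nat \<Rightarrow> perm set \<Rightarrow> bool" where
  "fusion_controlled n G \<longleftrightarrow>
     (\<forall>\<psi>\<in>G. \<forall>x. x permutes {1..n} \<and> inv' x \<circ> \<psi> \<circ> x \<in> G \<longrightarrow>
        (\<exists>y\<in>normalizer_S n G. inv' x \<circ> \<psi> \<circ> x = inv' y \<circ> \<psi> \<circ> y))"

end

theory Submission
  imports Defs
begin

(* Types are the conjugacy classes of S_n, and fusion control turns a conjugation in S_n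
   between two elements of G into one by an element of the normaliser N_{S_n}(G). Conjugation
   by the normaliser is an automorphism of the quotient power graph preserving types, so two of
   its components that contain vertices of the same type contain equally many vertices of each
   type. An edge T -- T^a of the type graph is realised by an edge [x] -- [x^a] of the quotient
   graph, hence these numbers are in fact the same for all components of the quotient graph whose
   types lie in one component C(T_i) of the type graph. The mu_{T_i}(G) elements of type T_i form
   classes [x] of phi(o(T_i)) elements each, and every component over C(T_i) contains
   k_{C_i}(T_i) of these classes; this gives the number of components over C(T_i). Finally,
   collapsing the classes [x] to single vertices does not change the number of components, so
   c_0(G) counts the components of the quotient graph. *)

section \<open>Periods of permutations and their orbits\<close>

lemma funpow_period:
  fixes f :: "'a \<Rightarrow> 'a"
  assumes "inj f" and "0 < N" and "(f ^^ N) z = z"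
  shows "0 < card (range (\<lambda>m. (f ^^ m) z))"
    and "(f ^^ a) z = (f ^^ b) z \<longleftrightarrow> [a = b] (mod card (range (\<lambda>m. (f ^^ m) z)))"
proof -
  define L where "L = (LEAST m. 0 < m \<and> (f ^^ m) z = z)"
  have L: "0 < L" "(f ^^ L) z = z"
    using LeastI[of "\<lambda>m. 0 < m \<and> (f ^^ m) z = z" N] assms(2,3) unfolding L_def by auto
  have funpow_mod: "(f ^^ m) z = (f ^^ (m mod L)) z" for m
    using funpow_mod_eq[OF L(2)] by simp
  have inj_below: "inj_on (\<lambda>m. (f ^^ m) z) {..<L}"
  proof (rule linorder_inj_onI')
    fix i j assume ij: "i \<in> {..<L}" "j \<in> {..<L}" "i < j"
    show "(f ^^ i) z \<noteq> (f ^^ j) z"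
    proof
      assume "(f ^^ i) z = (f ^^ j) z"
      moreover have "f ^^ j = f ^^ i \<circ> f ^^ (j - i)"
        using ij(3) by (simp flip: funpow_add)
      ultimately have "(f ^^ i) z = (f ^^ i) ((f ^^ (j - i)) z)" by simp
      then have "(f ^^ (j - i)) z = z"
        using inj_fn[OF assms(1), of i] by (simp add: inj_eq)
      moreover have "j - i < L" "0 < j - i" using ij by auto
      ultimately show False using not_less_Least[of "j - i"] unfolding L_def by blast
    qed
  qed
  have range_eq: "range (\<lambda>m. (f ^^ m) z) = (\<lambda>m. (f ^^ m) z) ` {..<L}"
  proof (intro equalityI subsetI)
    fix y assume "y \<in> range (\<lambda>m. (f ^^ m) z)"
    then obtain m where "y = (f ^^ (m mod L)) z" using funpow_mod by auto
    then show "y \<in> (\<lambda>m. (f ^^ m) z) ` {..<L}" using L(1) by simp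
  qed auto
  have card_eq: "card (range (\<lambda>m. (f ^^ m) z)) = L"
    unfolding range_eq card_image[OF inj_below] by simp
  show "0 < card (range (\<lambda>m. (f ^^ m) z))"
    using card_eq L(1) by simp
  have "(f ^^ a) z = (f ^^ b) z \<longleftrightarrow> a mod L = b mod L"
    using inj_onD[OF inj_below] L(1) funpow_mod[of a] funpow_mod[of b] by auto
  then show "(f ^^ a) z = (f ^^ b) z \<longleftrightarrow> [a = b] (mod card (range (\<lambda>m. (f ^^ m) z)))"
    unfolding card_eq cong_def .
qed

lemma comp_funpow_id: "((\<circ>) x ^^ m) id = (x :: 'a \<Rightarrow> 'a) ^^ m"
  by (induction m) (auto simp: fun_eq_iff)

lemma inj_comp_left: "inj p \<Longrightarrow> inj ((\<circ>) p)"
  by (rule injI) (auto simp: fun_eq_iff dest: injD)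

lemma permutes_funpow_eq_id:
  assumes "p permutes S" and "finite S"
  obtains N where "0 < N" and "p ^^ N = id"
proof -
  have "inj ((\<circ>) p)"
    using permutes_inj[OF assms(1)] by (rule inj_comp_left)
  moreover have "{q. \<exists>m. q = ((\<circ>) p ^^ m) id} \<subseteq> {q. q permutes S}"
    using permutes_funpow[OF assms(1)] by (auto simp: comp_funpow_id)
  then have "finite {q. \<exists>m. q = ((\<circ>) p ^^ m) id}"
    using finite_permutations[OF assms(2)] by (rule finite_subset)
  ultimately obtain N where "0 < N" "((\<circ>) p ^^ N) id = id"
    by (rule funpow_inj_finite)
  then show thesis using that by (simp add: comp_funpow_id)
qed

lemma cyc_period:
  assumes "x permutes S" and "finite S"
  shows "0 < card (cyc x)" and "x ^^ a = x ^^ b \<longleftrightarrow> [a = b] (mod card (cyc x))"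
proof -
  obtain N where "0 < N" "x ^^ N = id" using permutes_funpow_eq_id[OF assms] .
  moreover have "inj ((\<circ>) x)"
    using permutes_inj[OF assms(1)] by (rule inj_comp_left)
  moreover have "cyc x = range (\<lambda>m. ((\<circ>) x ^^ m) id)"
    unfolding cyc_def comp_funpow_id ..
  ultimately show "0 < card (cyc x)" "x ^^ a = x ^^ b \<longleftrightarrow> [a = b] (mod card (cyc x))"
    using funpow_period[of "(\<circ>) x" N id] by (simp_all add: comp_funpow_id)
qed

lemma orb_period:
  assumes "x permutes S" and "finite S"
  shows "0 < card (orb x i)" and "(x ^^ a) i = (x ^^ b) i \<longleftrightarrow> [a = b] (mod card (orb x i))"
proof -
  obtain N where "0 < N" "x ^^ N = id" using permutes_funpow_eq_id[OF assms] .
  then show "0 < card (orb x i)" "(x ^^ a) i = (x ^^ b) i \<longleftrightarrow> [a = b] (mod card (orb x i))"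
    using funpow_period[OF permutes_inj[OF assms(1)], of N i] unfolding orb_def by simp_all
qed

lemma funpow_eq_id_iff:
  assumes "x permutes S" and "finite S"
  shows "x ^^ k = id \<longleftrightarrow> card (cyc x) dvd k"
  using cyc_period(2)[OF assms, of k 0] by (simp add: cong_0_iff)

lemma funpow_fixes_iff:
  assumes "x permutes S" and "finite S"
  shows "(x ^^ k) i = i \<longleftrightarrow> card (orb x i) dvd k"
  using orb_period(2)[OF assms, where a = k and b = 0] by (simp add: cong_0_iff)

lemma type_order_ptype_of:
  assumes "x permutes {1..n}"
  shows "type_order (ptype_of n x) = card (cyc x)"
proof -
  have "Lcm ((\<lambda>i. card (orb x i)) ` {1..n}) dvd k \<longleftrightarrow> card (cyc x) dvd k" for k
  proof -
    have "Lcm ((\<lambda>i. card (orb x i)) ` {1..n}) dvd k \<longleftrightarrow> (\<forall>i\<in>{1..n}. (x ^^ k) i = i)"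
      by (simp add: Lcm_dvd_iff funpow_fixes_iff[OF assms])
    also have "\<dots> \<longleftrightarrow> x ^^ k = id"
      using permutes_not_in[OF permutes_funpow[OF assms]] by (auto simp: fun_eq_iff)
    also have "\<dots> \<longleftrightarrow> card (cyc x) dvd k"
      using funpow_eq_id_iff[OF assms] by simp
    finally show ?thesis .
  qed
  then have "Lcm ((\<lambda>i. card (orb x i)) ` {1..n}) = card (cyc x)"
    by (meson dvd_antisym dvd_refl)
  moreover have "set_mset (ptype_of n x) = (\<lambda>i. card (orb x i)) ` {1..n}"
    unfolding ptype_of_def by auto
  ultimately show ?thesis unfolding type_order_def by simp
qed

lemma funpow_in_cyc: "x ^^ m \<in> cyc x"
  unfolding cyc_def by simp

lemma self_in_cyc: "x \<in> cyc x"
  using funpow_in_cyc[where m = 1] by simp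

lemma cyc_funpow_subset: "cyc (x ^^ j) \<subseteq> cyc x"
  unfolding cyc_def by (auto simp: funpow_mult)

lemma cyc_funpow_eq_iff:
  assumes "x permutes S" and "finite S"
  shows "cyc (x ^^ j) = cyc x \<longleftrightarrow> coprime j (card (cyc x))"
proof -
  have "cyc (x ^^ j) = cyc x \<longleftrightarrow> x \<in> cyc (x ^^ j)"
  proof
    assume "x \<in> cyc (x ^^ j)"
    then obtain m where m: "x = (x ^^ j) ^^ m" unfolding cyc_def by auto
    have "x ^^ k \<in> cyc (x ^^ j)" for k
    proof -
      have "x ^^ k = (x ^^ j) ^^ (m * k)" by (metis m funpow_mult)
      then show ?thesis by (metis funpow_in_cyc)
    qed
    then have "cyc x \<subseteq> cyc (x ^^ j)" unfolding cyc_def by blast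
    then show "cyc (x ^^ j) = cyc x" using cyc_funpow_subset by blast
  qed (use self_in_cyc in metis)
  also have "\<dots> \<longleftrightarrow> (\<exists>m. x ^^ (j * m) = x ^^ 1)"
    unfolding cyc_def by (auto simp: funpow_mult eq_commute)
  also have "\<dots> \<longleftrightarrow> (\<exists>m. [j * m = 1] (mod card (cyc x)))"
    by (intro ex_cong1 cyc_period(2)[OF assms])
  also have "\<dots> \<longleftrightarrow> coprime j (card (cyc x))"
    using coprime_iff_invertible_nat by simp
  finally show ?thesis .
qed

lemma card_generators_cyc:
  assumes "x permutes S" and "finite S"
  shows "card {y. cyc y = cyc x} = totient (card (cyc x))"
proof -
  let ?c = "card (cyc x)"
  have c: "0 < ?c" using cyc_period(1)[OF assms] .
  have "{y. cyc y = cyc x} = (\<lambda>j. x ^^ j) ` totatives ?c"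
  proof (intro equalityI subsetI)
    fix y assume "y \<in> {y. cyc y = cyc x}"
    then have y: "cyc y = cyc x" by simp
    then obtain j where j: "y = x ^^ j" using self_in_cyc[of y] unfolding cyc_def by auto
    define j' where "j' = (if j mod ?c = 0 then ?c else j mod ?c)"
    have "[j = j'] (mod ?c)" unfolding j'_def cong_def by simp
    then have "y = x ^^ j'" using j cyc_period(2)[OF assms] by simp
    moreover have "j' \<in> totatives ?c"
      using c y \<open>y = x ^^ j'\<close> cyc_funpow_eq_iff[OF assms, of j']
      unfolding j'_def totatives_def by (auto simp: less_imp_le)
    ultimately show "y \<in> (\<lambda>j. x ^^ j) ` totatives ?c" by blast
  qed (use cyc_funpow_eq_iff[OF assms] in \<open>auto simp: totatives_def\<close>)
  moreover have "inj_on (\<lambda>j. x ^^ j) (totatives ?c)"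
  proof (rule inj_onI)
    fix a b assume ab: "a \<in> totatives ?c" "b \<in> totatives ?c" "x ^^ a = x ^^ b"
    then have "a mod ?c = b mod ?c" using cyc_period(2)[OF assms] by (simp add: cong_def)
    moreover have "j = (if j mod ?c = 0 then ?c else j mod ?c)" if "j \<in> totatives ?c" for j
      using that by (cases "j = ?c") (auto simp: totatives_def)
    ultimately show "a = b" using ab(1,2) by metis
  qed
  ultimately show ?thesis by (simp add: card_image totient_def)
qed

lemma funpow_in_orb: "(p ^^ m) i \<in> orb p i"
  unfolding orb_def by simp

lemma self_in_orb: "i \<in> orb p i"
  using funpow_in_orb[where m = 0] by simp

lemma orb_subset_of_mem:
  assumes "j \<in> orb p i"
  shows "orb p j \<subseteq> orb p i"
proof
  obtain k where k: "j = (p ^^ k) i" using assms unfolding orb_def by auto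
  fix z assume "z \<in> orb p j"
  then obtain m where "z = (p ^^ m) j" unfolding orb_def by auto
  then have "z = (p ^^ (m + k)) i" using k by (simp add: funpow_add)
  then show "z \<in> orb p i" using funpow_in_orb by metis
qed

lemma ptype_of_eq_if_cyc_eq:
  assumes "cyc x = cyc y"
  shows "ptype_of n x = ptype_of n y"
proof -
  have "orb p i = (\<lambda>g. g i) ` cyc p" for p i
    unfolding orb_def cyc_def by auto
  then have "orb x = orb y" using assms by (simp add: fun_eq_iff)
  then show ?thesis unfolding ptype_of_def by simp
qed

lemma orb_subset:
  assumes "p permutes S" and "i \<in> S"
  shows "orb p i \<subseteq> S"
  unfolding orb_def using permutes_in_funpow_image[OF assms] by blast

lemma orb_funpow_subset: "orb (p ^^ a) i \<subseteq> orb p i"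
  unfolding orb_def by (auto simp: funpow_mult)

lemma orb_eq_of_mem:
  assumes "p permutes S" and "finite S" and "j \<in> orb p i"
  shows "orb p j = orb p i"
proof
  show "orb p j \<subseteq> orb p i" using orb_subset_of_mem[OF assms(3)] .
  obtain k where k: "j = (p ^^ k) i" using assms(3) unfolding orb_def by auto
  obtain N where N: "0 < N" "p ^^ N = id" using permutes_funpow_eq_id[OF assms(1,2)] .
  have "(p ^^ (N * k - k)) j = (p ^^ (N * k - k + k)) i"
    unfolding k funpow_add by simp
  also have "N * k - k + k = N * k" using N(1) by simp
  also have "(p ^^ (N * k)) i = i" using N(2) by (simp flip: funpow_mult)
  finally have "i \<in> orb p j" using funpow_in_orb by metis
  then show "orb p i \<subseteq> orb p j" by (rule orb_subset_of_mem)
qed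

lemma orb_eqI:
  assumes "p permutes S" and "finite S" and "z \<in> orb p i" and "z \<in> orb p j"
  shows "orb p i = orb p j"
  using orb_eq_of_mem[OF assms(1,2,3)] orb_eq_of_mem[OF assms(1,2,4)] by simp

section \<open>The type of a power\<close>

lemma card_orb_funpow:
  assumes "p permutes S" and "finite S"
  shows "card (orb (p ^^ a) i) = card (orb p i) div gcd a (card (orb p i))"
proof -
  let ?L = "card (orb p i)"
  have "card (orb (p ^^ a) i) dvd k \<longleftrightarrow> ?L div gcd a ?L dvd k" for k
  proof -
    have "card (orb (p ^^ a) i) dvd k \<longleftrightarrow> (p ^^ (a * k)) i = i"
      using funpow_fixes_iff[OF permutes_funpow[OF assms(1)] assms(2)] by (simp add: funpow_mult)
    also have "\<dots> \<longleftrightarrow> ?L dvd a * k"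
      using funpow_fixes_iff[OF assms] .
    also have "\<dots> \<longleftrightarrow> ?L div gcd a ?L dvd k"
      using orb_period(1)[OF assms, of i]
      by (simp add: div_dvd_iff_mult gcd_mult_distrib_nat mult.commute)
    finally show ?thesis .
  qed
  then show ?thesis by (meson dvd_antisym dvd_refl)
qed

lemma image_mset_card_orbs_funpow:
  fixes p :: perm and i :: nat
  assumes "p permutes S" and "finite S"
  defines "L \<equiv> card (orb p i)"
  shows "image_mset card (mset_set (orb (p ^^ a) ` orb p i))
           = replicate_mset (gcd a L) (L div gcd a L)"
proof -
  let ?F = "orb (p ^^ a) ` orb p i"
  have L: "0 < L" unfolding L_def using orb_period(1)[OF assms(1,2)] .
  then have fin: "finite (orb p i)" unfolding L_def using card_ge_0_finite by blast
  have card_F: "card Y = L div gcd a L" if Y: "Y \<in> ?F" for Y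
  proof -
    obtain y where y: "y \<in> orb p i" "Y = orb (p ^^ a) y" using Y by blast
    then show ?thesis
      using card_orb_funpow[OF assms(1,2), of a y] orb_eq_of_mem[OF assms(1,2) y(1)]
      unfolding L_def by simp
  qed
  have union: "\<Union>?F = orb p i"
  proof (intro equalityI subsetI)
    fix z assume "z \<in> \<Union>?F"
    then obtain y where "y \<in> orb p i" "z \<in> orb (p ^^ a) y" by blast
    then show "z \<in> orb p i" using orb_funpow_subset orb_subset_of_mem by blast
  next
    fix z assume "z \<in> orb p i"
    then show "z \<in> \<Union>?F" using self_in_orb by blast
  qed
  have "(L div gcd a L) * card ?F = card (\<Union>?F)"
  proof (rule card_partition)
    show "finite (\<Union>?F)" using fin union by simp
    show "c1 \<inter> c2 = {}" if "c1 \<in> ?F" "c2 \<in> ?F" "c1 \<noteq> c2" for c1 c2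
      using that orb_eqI[OF permutes_funpow[OF assms(1)] assms(2)] by blast
  qed (use fin card_F in auto)
  then have "(L div gcd a L) * card ?F = L" unfolding union L_def .
  moreover have "L = (L div gcd a L) * gcd a L" by simp
  moreover have "0 < L div gcd a L" using L by (simp add: div_greater_zero_iff)
  ultimately have "card ?F = gcd a L" by (metis mult_left_cancel less_irrefl)
  then show ?thesis
    using image_mset_cong[of "mset_set ?F" card "\<lambda>_. L div gcd a L"] card_F fin
    by (simp add: image_mset_const_eq)
qed

lemma image_mset_mset_set_UN_disjoint:
  assumes "finite I" and "\<And>i. i \<in> I \<Longrightarrow> finite (F i)"
    and "\<And>i j. i \<in> I \<Longrightarrow> j \<in> I \<Longrightarrow> i \<noteq> j \<Longrightarrow> F i \<inter> F j = {}"
  shows "image_mset f (mset_set (\<Union>i\<in>I. F i)) = (\<Sum>i\<in>I. image_mset f (mset_set (F i)))"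
  using assms
proof (induction I rule: finite_induct)
  case (insert a I)
  then have "mset_set (F a \<union> (\<Union>i\<in>I. F i)) = mset_set (F a) + mset_set (\<Union>i\<in>I. F i)"
    by (intro mset_set_Union) auto
  with insert show ?case by simp
qed simp

lemma ptype_of_funpow:
  assumes "p permutes {1..n}"
  shows "ptype_of n (p ^^ a) = type_pow (ptype_of n p) a"
proof -
  let ?S = "{1..n}" and ?q = "p ^^ a"
  have orbs_eq: "orb ?q ` ?S = (\<Union>Ob\<in>orb p ` ?S. orb ?q ` Ob)"
    using orb_subset[OF assms] self_in_orb by fastforce
  have disj: "orb ?q ` O1 \<inter> orb ?q ` O2 = {}"
    if O1: "O1 \<in> orb p ` ?S" and O2: "O2 \<in> orb p ` ?S" and "O1 \<noteq> O2" for O1 O2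
  proof (rule ccontr)
    assume "orb ?q ` O1 \<inter> orb ?q ` O2 \<noteq> {}"
    then obtain x y where x: "x \<in> O1" and y: "y \<in> O2" and "orb ?q x = orb ?q y" by blast
    then have "x \<in> orb p y" using self_in_orb orb_funpow_subset by blast
    obtain i j where ij: "O1 = orb p i" "O2 = orb p j" using O1 O2 by blast
    then have "x \<in> orb p j" using \<open>x \<in> orb p y\<close> y orb_subset_of_mem by blast
    then have "O1 = O2" using orb_eqI[OF assms finite_atLeastAtMost] x ij by simp
    with \<open>O1 \<noteq> O2\<close> show False by simp
  qed
  have fin: "finite (orb ?q ` Ob)" if "Ob \<in> orb p ` ?S" for Ob
    using that orb_subset[OF assms] finite_subset by blast
  have "ptype_of n ?q = (\<Sum>Ob\<in>orb p ` ?S. image_mset card (mset_set (orb ?q ` Ob)))"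
    unfolding ptype_of_def orbs_eq
    by (rule image_mset_mset_set_UN_disjoint[OF finite_imageI[OF finite_atLeastAtMost] fin disj])
  also have "\<dots> = (\<Sum>Ob\<in>orb p ` ?S. replicate_mset (gcd a (card Ob)) (card Ob div gcd a (card Ob)))"
    using image_mset_card_orbs_funpow[OF assms finite_atLeastAtMost] by (intro sum.cong) auto
  also have "\<dots> = type_pow (ptype_of n p) a"
    unfolding type_pow_def ptype_of_def
    by (simp add: sum_unfold_sum_mset multiset.map_comp comp_def)
  finally show ?thesis .
qed

section \<open>Conjugation and types\<close>

definition conj_perm :: "perm \<Rightarrow> perm \<Rightarrow> perm" where
  "conj_perm y g = inv' y \<circ> g \<circ> y"

context
  fixes y :: perm and S :: "nat set"
  assumes y: "y permutes S"
begin

lemma conj_perm_comp: "conj_perm y (g \<circ> h) = conj_perm y g \<circ> conj_perm y h"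
  unfolding conj_perm_def fun_eq_iff using permutes_inverses(1)[OF y] by simp

lemma conj_perm_id: "conj_perm y id = id"
  unfolding conj_perm_def fun_eq_iff using permutes_inverses(2)[OF y] by simp

lemma conj_perm_funpow: "conj_perm y (g ^^ m) = conj_perm y g ^^ m"
  by (induction m) (simp_all only: funpow.simps conj_perm_id conj_perm_comp)

lemma conj_perm_inv_cancel: "conj_perm (inv' y) (conj_perm y g) = g"
  unfolding conj_perm_def fun_eq_iff
  using permutes_inverses[OF y] permutes_inv_inv[OF y] by simp

lemma inj_conj_perm: "inj (conj_perm y)"
  by (metis conj_perm_inv_cancel injI)

lemma cyc_conj_perm: "cyc (conj_perm y g) = conj_perm y ` cyc g"
  unfolding cyc_def conj_perm_funpow[symmetric] by (simp add: image_image)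

lemma orb_conj_perm: "orb (conj_perm y g) i = inv' y ` orb g (y i)"
proof -
  have "(conj_perm y g ^^ m) i = inv' y ((g ^^ m) (y i))" for m
    by (metis conj_perm_funpow conj_perm_def comp_apply)
  then show ?thesis unfolding orb_def by (auto simp: image_image)
qed

end

lemma ptype_of_conj_perm:
  assumes y: "y permutes {1..n}"
  shows "ptype_of n (conj_perm y g) = ptype_of n g"
proof -
  let ?S = "{1..n::nat}" and ?h = "image (inv' y)"
  have inj: "inj (inv' y)" using permutes_inj[OF permutes_inv[OF y]] .
  have "orb (conj_perm y g) ` ?S = ?h ` orb g ` y ` ?S"
    using orb_conj_perm[OF y] by (auto simp: image_iff)
  also have "y ` ?S = ?S" using permutes_image[OF y] .
  finally have orbs: "orb (conj_perm y g) ` ?S = ?h ` orb g ` ?S" .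
  have "inj_on ?h (orb g ` ?S)"
    using inj by (simp add: inj_on_def inj_image_eq_iff)
  then have "mset_set (orb (conj_perm y g) ` ?S) = image_mset ?h (mset_set (orb g ` ?S))"
    unfolding orbs by (rule image_mset_mset_set[symmetric])
  moreover have "card (?h Ob) = card Ob" for Ob
    using inj by (simp add: card_image inj_on_subset)
  ultimately show ?thesis
    unfolding ptype_of_def by (simp add: multiset.map_comp comp_def)
qed

lemma bij_betw_of_image_mset_eq:
  assumes "finite A" and "finite B" and "image_mset f (mset_set A) = image_mset g (mset_set B)"
  obtains h where "bij_betw h A B" and "\<forall>a\<in>A. g (h a) = f a"
  using assms
proof (induction A arbitrary: B thesis rule: finite_induct)
  case empty
  then have "B = {}" by (simp add: mset_set_empty_iff)
  then show ?case using empty.prems(1)[of "\<lambda>_. undefined"] by (simp add: bij_betw_def)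
next
  case (insert a A)
  have "f a \<in># image_mset g (mset_set B)"
    using insert.prems(3)[symmetric] insert.hyps by simp
  then obtain b where b: "b \<in> B" "g b = f a" using insert.prems(2) by auto
  have "image_mset f (mset_set A) = image_mset g (mset_set (B - {b}))"
    using insert.prems(3) insert.hyps mset_set.remove[OF insert.prems(2) b(1)] b(2) by simp
  then obtain h where h: "bij_betw h A (B - {b})" "\<forall>a\<in>A. g (h a) = f a"
    using insert.IH[of "B - {b}"] insert.prems(2) by blast
  have "bij_betw (h(a := b)) A (B - {b})"
    using h(1) insert.hyps(2) by (metis bij_betw_cong fun_upd_other)
  then have "bij_betw (h(a := b)) (A \<union> {a}) ((B - {b}) \<union> {b})"
    using notIn_Un_bij_betw[of a A "h(a := b)" "B - {b}"] insert.hyps(2) by simp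
  moreover have "A \<union> {a} = insert a A" "(B - {b}) \<union> {b} = B" using b(1) by auto
  moreover have "\<forall>x\<in>insert a A. g ((h(a := b)) x) = f x"
    using h(2) b(2) insert.hyps(2) by auto
  ultimately show ?case using insert.prems(1) by simp
qed

lemma conj_perm_eqI:
  assumes "\<sigma> permutes S" and "p permutes S" and "q permutes S"
    and "\<And>x. x \<in> S \<Longrightarrow> \<sigma> (q x) = p (\<sigma> x)"
  shows "conj_perm \<sigma> p = q"
proof
  fix x
  have "\<sigma> (q x) = p (\<sigma> x)"
    using assms(4) permutes_not_in[OF assms(1)] permutes_not_in[OF assms(2)]
      permutes_not_in[OF assms(3)] by (cases "x \<in> S") auto
  then show "conj_perm \<sigma> p x = q x"
    unfolding conj_perm_def using permutes_inverses(2)[OF assms(1)] by (metis comp_apply)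
qed

lemma permutes_if_surj_on:
  assumes "finite S" and "S \<subseteq> \<sigma> ` S" and "\<And>x. x \<notin> S \<Longrightarrow> \<sigma> x = x"
  shows "\<sigma> permutes S"
proof (rule bij_imp_permutes)
  have "card (\<sigma> ` S) \<le> card S" using assms(1) by (rule card_image_le)
  then have "S = \<sigma> ` S" using assms(1,2) by (intro card_subset_eq) (simp_all add: card_mono le_antisym)
  moreover have "inj_on \<sigma> S" using finite_surj_inj[OF assms(1,2)] .
  ultimately show "bij_betw \<sigma> S S" unfolding bij_betw_def by simp
qed (use assms(3) in blast)

lemma orb_some_mem:
  assumes "p permutes S" and "finite S"
  shows "orb p (SOME z. z \<in> orb p i) = orb p i"
  using orb_eq_of_mem[OF assms] self_in_orb by (metis someI)

lemma conjugate_if_orbits_match: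
  assumes p: "p permutes S" and q: "q permutes S" and S: "finite S"
    and H: "bij_betw H (orb q ` S) (orb p ` S)"
    and card_H: "\<And>Ob. Ob \<in> orb q ` S \<Longrightarrow> card (H Ob) = card Ob"
  obtains \<sigma> where "\<sigma> permutes S" and "conj_perm \<sigma> p = q"
proof -
  \<comment> \<open>\<open>a x\<close> and \<open>b x\<close> are base points of the \<open>q\<close>-orbit of \<open>x\<close> and of its partner \<open>p\<close>-orbit;
    \<open>\<sigma>\<close> maps \<open>(q ^^ k) (a x)\<close> to \<open>(p ^^ k) (b x)\<close>, which is well defined as the two orbits
    have the same length\<close>
  define a where "a x = (SOME z. z \<in> orb q x)" for x
  define b where "b x = (SOME z. z \<in> H (orb q x))" for x
  have orb_a: "orb q (a x) = orb q x" for x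
    unfolding a_def using orb_some_mem[OF q S] .
  have H_orb: "\<exists>z\<in>S. H (orb q x) = orb p z" if "x \<in> S" for x
    using bij_betw_apply[OF H] that by blast
  have orb_b: "orb p (b x) = H (orb q x)" if "x \<in> S" for x
    using H_orb[OF that] orb_some_mem[OF p S] unfolding b_def by auto
  have a_q: "a (q x) = a x" and b_q: "b (q x) = b x" for x
    using orb_eq_of_mem[OF q S funpow_in_orb[where m = 1]] unfolding a_def b_def by simp_all
  have steps: "\<exists>k. (q ^^ k) (a x) = x" for x
  proof -
    have "x \<in> orb q (a x)" using self_in_orb orb_a by metis
    then show ?thesis unfolding orb_def by (auto simp: eq_commute)
  qed
  define m where "m x = (SOME k. (q ^^ k) (a x) = x)" for x
  have m: "(q ^^ m x) (a x) = x" for x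
    unfolding m_def using steps by (rule someI_ex)
  define \<sigma> where "\<sigma> x = (if x \<in> S then (p ^^ m x) (b x) else x)" for x
  have \<sigma>_eq: "\<sigma> x = (p ^^ k) (b x)" if x: "x \<in> S" and k: "(q ^^ k) (a x) = x" for x k
  proof -
    have "card (orb p (b x)) = card (orb q (a x))"
      using orb_a orb_b[OF x] card_H[of "orb q x"] x by simp
    then have "(q ^^ m x) (a x) = (q ^^ k) (a x) \<longleftrightarrow> (p ^^ m x) (b x) = (p ^^ k) (b x)"
      using orb_period(2)[OF p S] orb_period(2)[OF q S] by simp
    then show ?thesis unfolding \<sigma>_def using x m k by simp
  qed
  have comm: "\<sigma> (q x) = p (\<sigma> x)" if x: "x \<in> S" for x
  proof -
    have qx: "q x \<in> S" using permutes_in_image[OF q] x by simp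
    have "(q ^^ Suc (m x)) (a (q x)) = q x" using m a_q by simp
    then have "\<sigma> (q x) = (p ^^ Suc (m x)) (b (q x))" by (rule \<sigma>_eq[OF qx])
    then show ?thesis unfolding \<sigma>_def b_q using x by simp
  qed
  have onto: "S \<subseteq> \<sigma> ` S"
  proof
    fix z assume z: "z \<in> S"
    then have "orb p z \<in> H ` orb q ` S" using H by (simp add: bij_betw_def)
    then obtain x0 where x0: "x0 \<in> S" "orb p z = H (orb q x0)" by blast
    then obtain k where k: "z = (p ^^ k) (b x0)"
      using self_in_orb[of z p] orb_b[OF x0(1)] unfolding orb_def by auto
    define x where "x = (q ^^ k) (a x0)"
    have "orb q x = orb q x0"
      using orb_eq_of_mem[OF q S funpow_in_orb] orb_a unfolding x_def by metis
    then have "a x = a x0" "b x = b x0" unfolding a_def b_def by simp_all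
    moreover have "x \<in> S"
      unfolding x_def using orb_subset[OF q x0(1)] orb_a[of x0] funpow_in_orb by blast
    ultimately have "\<sigma> x = z" using \<sigma>_eq[of x k] k unfolding x_def by simp
    then show "z \<in> \<sigma> ` S" using \<open>x \<in> S\<close> by blast
  qed
  have perm: "\<sigma> permutes S" by (rule permutes_if_surj_on[OF S onto]) (simp add: \<sigma>_def)
  then show thesis using conj_perm_eqI[OF perm p q comm] that by blast
qed

lemma conjugate_if_ptype_of_eq:
  assumes p: "p permutes {1..n}" and q: "q permutes {1..n}"
    and "ptype_of n p = ptype_of n q"
  obtains \<sigma> where "\<sigma> permutes {1..n}" and "conj_perm \<sigma> p = q"
proof -
  have "image_mset card (mset_set (orb q ` {1..n})) = image_mset card (mset_set (orb p ` {1..n}))"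
    using assms(3) unfolding ptype_of_def by simp
  then obtain H where "bij_betw H (orb q ` {1..n}) (orb p ` {1..n})"
    and "\<forall>Ob\<in>orb q ` {1..n}. card (H Ob) = card Ob"
    by (rule bij_betw_of_image_mset_eq[rotated 2]) simp_all
  then show thesis
    using conjugate_if_orbits_match[OF p q finite_atLeastAtMost] that by blast
qed

section \<open>Connected components\<close>

lemma conn_rel_subset: "conn_rel V E \<subseteq> V \<times> V"
  unfolding conn_rel_def by auto

lemma conn_rel_refl: "x \<in> V \<Longrightarrow> (x, x) \<in> conn_rel V E"
  unfolding conn_rel_def by auto

lemma conn_rel_edge: "x \<in> V \<Longrightarrow> y \<in> V \<Longrightarrow> E x y \<Longrightarrow> (x, y) \<in> conn_rel V E"
  unfolding conn_rel_def by auto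

lemma conn_rel_trans:
  "(x, y) \<in> conn_rel V E \<Longrightarrow> (y, z) \<in> conn_rel V E \<Longrightarrow> (x, z) \<in> conn_rel V E"
  unfolding conn_rel_def by (auto intro: rtrancl_trans)

lemma conn_rel_sym:
  assumes "\<And>a b. E a b \<Longrightarrow> E b a" and "(x, y) \<in> conn_rel V E"
  shows "(y, x) \<in> conn_rel V E"
proof -
  let ?R = "{(a, b). a \<in> V \<and> b \<in> V \<and> E a b}"
  have "?R\<inverse> = ?R" using assms(1) by auto
  then show ?thesis
    using assms(2) rtrancl_converseI[of x y ?R] unfolding conn_rel_def by simp
qed

lemma equiv_conn_rel:
  assumes "\<And>a b. E a b \<Longrightarrow> E b a"
  shows "equiv V (conn_rel V E)"
proof (rule equivI)
  show "refl_on V (conn_rel V E)" by (rule refl_onI) (rule conn_rel_refl)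
  show "sym (conn_rel V E)" by (rule symI) (rule conn_rel_sym[where E = E, OF assms])
  show "trans (conn_rel V E)" by (rule transI) (rule conn_rel_trans)
qed (rule conn_rel_subset)

lemma conn_rel_induct [consumes 1, case_names refl step]:
  assumes "(x, y) \<in> conn_rel V E"
    and "P x"
    and "\<And>y z. (x, y) \<in> conn_rel V E \<Longrightarrow> y \<in> V \<Longrightarrow> z \<in> V \<Longrightarrow> E y z \<Longrightarrow> P y \<Longrightarrow> P z"
  shows "P y"
proof -
  have "(x, y) \<in> {(a, b). a \<in> V \<and> b \<in> V \<and> E a b}\<^sup>*" and x: "x \<in> V"
    using assms(1) unfolding conn_rel_def by auto
  then show ?thesis
  proof (induction rule: rtrancl_induct)
    case (step y z)
    then show ?case using assms(3) x unfolding conn_rel_def by blast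
  qed (use assms(2) in simp)
qed

lemma conn_rel_map:
  assumes "(x, y) \<in> conn_rel V E"
    and "f ` V \<subseteq> W"
    and "\<And>u v. u \<in> V \<Longrightarrow> v \<in> V \<Longrightarrow> E u v \<Longrightarrow> f u = f v \<or> F (f u) (f v)"
  shows "(f x, f y) \<in> conn_rel W F"
  using assms(1)
proof (induction rule: conn_rel_induct)
  case refl
  have "x \<in> V" using assms(1) conn_rel_subset by blast
  then show ?case using assms(2) by (blast intro: conn_rel_refl)
next
  case (step y z)
  then have "f y \<in> W" "f z \<in> W" using assms(2) by blast+
  then have "(f y, f z) \<in> conn_rel W F"
    using assms(3)[OF step.hyps(2-4)] conn_rel_refl conn_rel_edge by metis
  with step.IH show ?case by (rule conn_rel_trans)
qed

lemma card_quotient_eq_of_surj: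
  assumes "equiv V R" and "equiv Q R'" and "f ` V = Q"
    and "\<And>x y. x \<in> V \<Longrightarrow> y \<in> V \<Longrightarrow> (x, y) \<in> R \<longleftrightarrow> (f x, f y) \<in> R'"
  shows "card (V // R) = card (Q // R')"
proof -
  have class_image: "f ` (R `` {x}) = R' `` {f x}" if x: "x \<in> V" for x
  proof (intro equalityI subsetI)
    fix Y assume "Y \<in> f ` (R `` {x})"
    then obtain y where "(x, y) \<in> R" "Y = f y" by blast
    moreover have "y \<in> V" using \<open>(x, y) \<in> R\<close> equiv_type[OF assms(1)] by blast
    ultimately show "Y \<in> R' `` {f x}" using assms(4) x by simp
  next
    fix Y assume Y: "Y \<in> R' `` {f x}"
    then have "Y \<in> Q" using equiv_type[OF assms(2)] by blast
    then obtain y where "y \<in> V" "Y = f y" using assms(3) by blast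
    then show "Y \<in> f ` (R `` {x})" using assms(4) x Y by blast
  qed
  have "bij_betw (image f) (V // R) (Q // R')"
  proof (rule bij_betw_imageI)
    show "inj_on (image f) (V // R)"
    proof (rule inj_onI)
      fix K1 K2 assume K: "K1 \<in> V // R" "K2 \<in> V // R" "f ` K1 = f ` K2"
      obtain x where x: "x \<in> V" "K1 = R `` {x}" using K(1) by (rule quotientE)
      obtain y where y: "y \<in> V" "K2 = R `` {y}" using K(2) by (rule quotientE)
      have "(f x, f y) \<in> R'"
        using K(3) class_image x y assms(3) equiv_class_eq_iff[OF assms(2)] by auto
      then show "K1 = K2" using x y assms(4) equiv_class_eq[OF assms(1)] by simp
    qed
    show "image f ` (V // R) = Q // R'"
      unfolding quotient_def using class_image assms(3) by auto
  qed
  then show ?thesis by (rule bij_betw_same_card)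
qed

lemma conn_rel_lift:
  assumes "(f x, Y) \<in> conn_rel Q F" and x: "x \<in> V"
    and edge_lift: "\<And>X Y. X \<in> Q \<Longrightarrow> Y \<in> Q \<Longrightarrow> F X Y \<Longrightarrow>
               \<exists>x y. f x = X \<and> f y = Y \<and> (x, y) \<in> conn_rel V E"
    and fibre: "\<And>x y. x \<in> V \<Longrightarrow> y \<in> V \<Longrightarrow> f x = f y \<Longrightarrow> (x, y) \<in> conn_rel V E"
  shows "\<forall>y\<in>V. f y = Y \<longrightarrow> (x, y) \<in> conn_rel V E"
  using assms(1)
proof (induction rule: conn_rel_induct)
  case refl
  show ?case
  proof (intro ballI impI)
    fix w assume "w \<in> V" "f w = f x"
    then show "(x, w) \<in> conn_rel V E" using fibre[OF x] by simp
  qed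
next
  case (step Y Z)
  obtain y z where yz: "f y = Y" "f z = Z" "(y, z) \<in> conn_rel V E"
    using edge_lift[OF step.hyps(2-4)] by blast
  have "y \<in> V" "z \<in> V" using yz(3) conn_rel_subset by blast+
  have "(x, y) \<in> conn_rel V E" using step.IH yz(1) \<open>y \<in> V\<close> by blast
  then have xz: "(x, z) \<in> conn_rel V E" using yz(3) by (rule conn_rel_trans)
  show ?case
  proof (intro ballI impI)
    fix w assume "w \<in> V" "f w = Z"
    then have "(z, w) \<in> conn_rel V E" using fibre[OF \<open>z \<in> V\<close>] yz(2) by simp
    with xz show "(x, w) \<in> conn_rel V E" by (rule conn_rel_trans)
  qed
qed

lemma card_components_eq_of_map:
  assumes symE: "\<And>a b. E a b \<Longrightarrow> E b a" and symF: "\<And>a b. F a b \<Longrightarrow> F b a"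
    and surj: "f ` V = Q"
    and edge: "\<And>x y. x \<in> V \<Longrightarrow> y \<in> V \<Longrightarrow> E x y \<Longrightarrow> f x = f y \<or> F (f x) (f y)"
    and edge_lift: "\<And>X Y. X \<in> Q \<Longrightarrow> Y \<in> Q \<Longrightarrow> F X Y \<Longrightarrow>
               \<exists>x y. f x = X \<and> f y = Y \<and> (x, y) \<in> conn_rel V E"
    and fibre: "\<And>x y. x \<in> V \<Longrightarrow> y \<in> V \<Longrightarrow> f x = f y \<Longrightarrow> (x, y) \<in> conn_rel V E"
  shows "card (components V E) = card (components Q F)"
  unfolding components_def
proof (rule card_quotient_eq_of_surj[OF equiv_conn_rel[where E = E, OF symE]
      equiv_conn_rel[where E = F, OF symF] surj])
  fix x y assume "x \<in> V" "y \<in> V"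
  have "(x, y) \<in> conn_rel V E \<Longrightarrow> (f x, f y) \<in> conn_rel Q F"
    using conn_rel_map[of x y V E f Q F, OF _ _ edge] surj by simp
  moreover have "(f x, f y) \<in> conn_rel Q F \<Longrightarrow> (x, y) \<in> conn_rel V E"
    using conn_rel_lift[where f = f and Y = "f y" and Q = Q and F = F and V = V and E = E,
        OF _ \<open>x \<in> V\<close> edge_lift fibre] \<open>y \<in> V\<close> by blast
  ultimately show "(x, y) \<in> conn_rel V E \<longleftrightarrow> (f x, f y) \<in> conn_rel Q F" by blast
qed

lemma components_subset:
  assumes "D \<in> components V E"
  shows "D \<subseteq> V"
proof -
  obtain z where "D = conn_rel V E `` {z}"
    using assms unfolding components_def by (rule quotientE)
  then show ?thesis using conn_rel_subset by blast
qed

lemma mem_component_iff: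
  assumes symE: "\<And>a b. E a b \<Longrightarrow> E b a" and "D \<in> components V E" and "x \<in> D"
  shows "y \<in> D \<longleftrightarrow> (x, y) \<in> conn_rel V E"
proof -
  obtain z where "z \<in> V" and D: "D = conn_rel V E `` {z}"
    using assms(2) unfolding components_def by (rule quotientE)
  then have zx: "(z, x) \<in> conn_rel V E" using assms(3) by simp
  have xz: "(x, z) \<in> conn_rel V E" by (rule conn_rel_sym[where E = E, OF symE zx])
  show ?thesis
    unfolding D using conn_rel_trans[OF xz] conn_rel_trans[OF zx] by auto
qed

lemma component_of_in_components:
  "x \<in> V \<Longrightarrow> component_of V E x \<in> components V E"
  unfolding component_of_def components_def by (rule quotientI)

lemma self_in_component_of: "x \<in> V \<Longrightarrow> x \<in> component_of V E x"
  unfolding component_of_def by (simp add: conn_rel_refl)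

lemma components_eqI:
  assumes "\<And>a b. E a b \<Longrightarrow> E b a" and "D1 \<in> components V E" and "D2 \<in> components V E"
    and "x \<in> D1" and "x \<in> D2"
  shows "D1 = D2"
proof (intro equalityI subsetI)
  fix y
  show "y \<in> D1 \<Longrightarrow> y \<in> D2" and "y \<in> D2 \<Longrightarrow> y \<in> D1"
    using mem_component_iff[where E = E, OF assms(1,2,4)] mem_component_iff[where E = E, OF assms(1,3,5)]
    by simp_all
qed

lemma finite_components: "finite V \<Longrightarrow> finite (components V E)"
  unfolding components_def by (rule finite_quotient[OF _ conn_rel_subset])

lemma components_nonempty:
  assumes "D \<in> components V E"
  obtains x where "x \<in> D"
proof -
  obtain z where "z \<in> V" "D = conn_rel V E `` {z}"
    using assms unfolding components_def by (rule quotientE)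
  then have "z \<in> D" by (simp add: conn_rel_refl)
  then show thesis by (rule that)
qed

section \<open>The quotient power graph\<close>

lemma qadj_sym: "qadj X Y \<Longrightarrow> qadj Y X"
  unfolding qadj_def by blast

lemma type_adj_sym: "type_adj T T' \<Longrightarrow> type_adj T' T"
  unfolding type_adj_def by blast

locale perm_subgroup =
  fixes n :: nat and G :: "perm set"
  assumes subgroup: "subgroup G (sym_group n)"
begin

lemma mem_permutes: "g \<in> G \<Longrightarrow> g permutes {1..n}"
  using subgroup.subset[OF subgroup] by (auto simp: sym_group_carrier)

lemma id_mem: "id \<in> G"
  using subgroup.one_closed[OF subgroup] by (simp add: sym_group_one)

lemma comp_mem: "g \<in> G \<Longrightarrow> h \<in> G \<Longrightarrow> g \<circ> h \<in> G"
  using subgroup.m_closed[OF subgroup] by (simp add: sym_group_mult)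

lemma funpow_mem: "g \<in> G \<Longrightarrow> g ^^ m \<in> G"
  by (induction m) (simp_all add: id_mem comp_mem)

lemma finite_G: "finite G"
  using mem_permutes by (blast intro: finite_subset[OF _ finite_permutations[OF finite_atLeastAtMost]])

lemma cyc_subset: "g \<in> G \<Longrightarrow> cyc g \<subseteq> G"
  unfolding cyc_def using funpow_mem by blast

lemma cls_eq: "g \<in> G \<Longrightarrow> cls G g = {y. cyc y = cyc g}"
  unfolding cls_def using cyc_subset self_in_cyc by blast

lemma card_cls: "g \<in> G \<Longrightarrow> card (cls G g) = totient (type_order (ptype_of n g))"
  using cls_eq card_generators_cyc[OF mem_permutes] type_order_ptype_of[OF mem_permutes]
  by simp

lemma type_order_gt_1:
  assumes "g \<in> G" and "g \<noteq> id"
  shows "1 < type_order (ptype_of n g)"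
proof -
  have "finite (cyc g)" using cyc_period(1)[OF mem_permutes[OF assms(1)]] card_ge_0_finite by blast
  moreover have "{id, g} \<subseteq> cyc g" using funpow_in_cyc[where m = 0] self_in_cyc by simp
  ultimately have "card {id, g} \<le> card (cyc g)" by (rule card_mono)
  then show ?thesis using assms(2) type_order_ptype_of[OF mem_permutes[OF assms(1)]] by simp
qed

lemma ptype_of_in_types0_iff:
  assumes "g \<in> G"
  shows "ptype_of n g \<in> types0 n G \<longleftrightarrow> g \<noteq> id"
proof
  assume "ptype_of n g \<in> types0 n G"
  then obtain h where "h \<in> G" "h \<noteq> id" "ptype_of n g = ptype_of n h"
    unfolding types0_def G0_def by blast
  then have "1 < type_order (ptype_of n g)" using type_order_gt_1 by simp
  moreover have "type_order (ptype_of n id) = 1"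
    using type_order_ptype_of[OF permutes_id] by (simp add: cyc_def)
  ultimately show "g \<noteq> id" by auto
qed (use assms in \<open>auto simp: types0_def G0_def\<close>)

lemma self_in_cls: "g \<in> G \<Longrightarrow> g \<in> cls G g"
  unfolding cls_def by simp

lemma cls_eq_of_mem: "x \<in> cls G g \<Longrightarrow> cls G x = cls G g"
  unfolding cls_def by simp

lemma ptype_of_cls: "x \<in> cls G g \<Longrightarrow> ptype_of n x = ptype_of n g"
  unfolding cls_def by (blast intro: ptype_of_eq_if_cyc_eq)

lemma cls_subset_G0:
  assumes "g \<in> G0 G"
  shows "cls G g \<subseteq> G0 G"
proof
  fix x assume x: "x \<in> cls G g"
  have "x \<noteq> id"
  proof
    assume "x = id"
    moreover have "cyc id = {id}" unfolding cyc_def by auto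
    ultimately have "cyc g = {id}" using x unfolding cls_def by simp
    then show False using self_in_cyc[of g] assms unfolding G0_def by simp
  qed
  then show "x \<in> G0 G" using x unfolding cls_def G0_def by simp
qed

lemma qvert_memD: "X \<in> qvert G \<Longrightarrow> x \<in> X \<Longrightarrow> x \<in> G0 G \<and> cls G x = X"
  unfolding qvert_def using cls_subset_G0 cls_eq_of_mem by blast

lemma qvert_nonempty:
  assumes "X \<in> qvert G"
  obtains x where "x \<in> X"
  using assms self_in_cls unfolding qvert_def G0_def by blast

lemma finite_qvert: "finite (qvert G)"
  unfolding qvert_def G0_def using finite_G by simp

lemma c0_eq_card_components_qvert: "c0 G = card (components (qvert G) qadj)"
  unfolding c0_def
proof (rule card_components_eq_of_map[where f = "cls G"])
  show "cls G ` G0 G = qvert G" unfolding qvert_def ..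
  show "pow_adj a b \<Longrightarrow> pow_adj b a" for a b unfolding pow_adj_def by blast
  show "qadj X Y \<Longrightarrow> qadj Y X" for X Y by (rule qadj_sym)
  show "cls G x = cls G y \<or> qadj (cls G x) (cls G y)"
    if "x \<in> G0 G" "y \<in> G0 G" "pow_adj x y" for x y
    using that self_in_cls unfolding qadj_def pow_adj_def G0_def by blast
  show "\<exists>x y. cls G x = X \<and> cls G y = Y \<and> (x, y) \<in> conn_rel (G0 G) pow_adj"
    if "X \<in> qvert G" "Y \<in> qvert G" "qadj X Y" for X Y
  proof -
    obtain x y m where xy: "x \<in> X" "y \<in> Y" "0 < m" "x = y ^^ m \<or> y = x ^^ m"
      using \<open>qadj X Y\<close> unfolding qadj_def by blast
    then have "x \<in> G0 G" "y \<in> G0 G" "cls G x = X" "cls G y = Y"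
      using qvert_memD that(1,2) by blast+
    moreover have "x \<noteq> y" using \<open>qadj X Y\<close> calculation(3,4) unfolding qadj_def by blast
    ultimately show ?thesis
      using xy conn_rel_edge[of x "G0 G" y pow_adj] unfolding pow_adj_def by blast
  qed
  show "(x, y) \<in> conn_rel (G0 G) pow_adj"
    if xy: "x \<in> G0 G" "y \<in> G0 G" "cls G x = cls G y" for x y
  proof (cases "x = y")
    case True
    then show ?thesis using xy(1) by (simp add: conn_rel_refl)
  next
    case False
    have "y \<in> cls G x" using xy self_in_cls unfolding G0_def by simp
    then have "y \<in> cyc x" using self_in_cyc[of y] unfolding cls_def by simp
    then obtain m where m: "y = x ^^ m" unfolding cyc_def by blast
    with xy(2) have "m \<noteq> 0" unfolding G0_def by auto
    then have "pow_adj x y" using m False unfolding pow_adj_def by blast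
    then show ?thesis by (rule conn_rel_edge[OF xy(1,2)])
  qed
qed

definition vtype :: "perm set \<Rightarrow> ptype" where
  "vtype X = ptype_of n (SOME x. x \<in> X)"

lemma vtype_eq:
  assumes "X \<in> qvert G" and "x \<in> X"
  shows "vtype X = ptype_of n x"
proof -
  have "(SOME x. x \<in> X) \<in> cls G x"
    using someI[of "\<lambda>x. x \<in> X", OF assms(2)] qvert_memD[OF assms] by simp
  then show ?thesis unfolding vtype_def by (rule ptype_of_cls)
qed

lemma vtype_cls: "g \<in> G0 G \<Longrightarrow> vtype (cls G g) = ptype_of n g"
  using vtype_eq[of "cls G g" g] self_in_cls unfolding qvert_def G0_def by simp

lemma vtype_in_types0: "X \<in> qvert G \<Longrightarrow> vtype X \<in> types0 n G"
  using vtype_eq qvert_memD unfolding types0_def by (metis image_eqI qvert_nonempty)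

lemma kC_eq_card_vtype: "C \<subseteq> qvert G \<Longrightarrow> kC n C T = card {X \<in> C. vtype X = T}"
  unfolding kC_def using vtype_eq by (metis (no_types, lifting) qvert_nonempty subsetD)

lemma vtype_qadj:
  assumes "X \<in> qvert G" and "Y \<in> qvert G" and "qadj X Y"
  shows "vtype X = vtype Y \<or> type_adj (vtype X) (vtype Y)"
proof -
  obtain x y m where xy: "x \<in> X" "y \<in> Y" "0 < m" "x = y ^^ m \<or> y = x ^^ m"
    using assms(3) unfolding qadj_def by blast
  have "x \<in> G" "y \<in> G" using qvert_memD assms(1,2) xy(1,2) unfolding G0_def by blast+
  then have "vtype X = type_pow (vtype Y) m \<or> vtype Y = type_pow (vtype X) m"
    using xy(4) ptype_of_funpow[OF mem_permutes] vtype_eq[OF assms(1) xy(1)] vtype_eq[OF assms(2) xy(2)]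
    by auto
  then show ?thesis unfolding type_adj_def using xy(3) by blast
qed

lemma vtype_conn_rel:
  assumes "(X, Y) \<in> conn_rel (qvert G) qadj"
  shows "(vtype X, vtype Y) \<in> conn_rel (types0 n G) type_adj"
  using conn_rel_map[of X Y "qvert G" qadj vtype "types0 n G" type_adj, OF assms _ vtype_qadj]
    vtype_in_types0 by blast

lemma cls_funpow_conn_rel:
  assumes "g \<in> G0 G" and "0 < a" and "g ^^ a \<noteq> id"
  shows "(cls G g, cls G (g ^^ a)) \<in> conn_rel (qvert G) qadj"
proof -
  have "g ^^ a \<in> G0 G" using assms funpow_mem unfolding G0_def by blast
  then have Q: "cls G g \<in> qvert G" "cls G (g ^^ a) \<in> qvert G"
    using assms(1) unfolding qvert_def by blast+
  show ?thesis
  proof (cases "cls G g = cls G (g ^^ a)")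
    case True
    then show ?thesis using Q by (simp add: conn_rel_refl)
  next
    case False
    have "g \<in> cls G g" "g ^^ a \<in> cls G (g ^^ a)"
      using assms(1) funpow_mem self_in_cls unfolding G0_def by blast+
    then have "qadj (cls G g) (cls G (g ^^ a))" unfolding qadj_def using False assms(2) by blast
    then show ?thesis by (rule conn_rel_edge[OF Q])
  qed
qed

lemma adjacent_types_linked:
  assumes "T1 \<in> types0 n G" and "T2 \<in> types0 n G" and "type_adj T1 T2"
  obtains X1 X2 where "(X1, X2) \<in> conn_rel (qvert G) qadj" and "vtype X1 = T1" and "vtype X2 = T2"
proof -
  have linked: "\<exists>X1 X2. (X1, X2) \<in> conn_rel (qvert G) qadj \<and> vtype X1 = T \<and> vtype X2 = type_pow T a"
    if T: "T \<in> types0 n G" and Ta: "type_pow T a \<in> types0 n G" and a: "0 < a" for T a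
  proof -
    obtain g where g: "g \<in> G0 G" "ptype_of n g = T" using T unfolding types0_def by blast
    then have gG: "g \<in> G" unfolding G0_def by simp
    have type_ga: "ptype_of n (g ^^ a) = type_pow T a"
      using ptype_of_funpow[OF mem_permutes[OF gG]] g(2) by simp
    have "g ^^ a \<noteq> id"
      using ptype_of_in_types0_iff[OF funpow_mem[OF gG, of a]] Ta type_ga by simp
    then have ga: "g ^^ a \<in> G0 G" using funpow_mem[OF gG] unfolding G0_def by simp
    show ?thesis
    proof (intro exI conjI)
      show "(cls G g, cls G (g ^^ a)) \<in> conn_rel (qvert G) qadj"
        using cls_funpow_conn_rel[OF g(1) a] \<open>g ^^ a \<noteq> id\<close> .
      show "vtype (cls G g) = T" using vtype_cls g by simp
      show "vtype (cls G (g ^^ a)) = type_pow T a"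
        using vtype_cls[OF ga] type_ga by simp
    qed
  qed
  obtain a where a: "0 < a" and pow: "T1 = type_pow T2 a \<or> T2 = type_pow T1 a"
    using assms(3) unfolding type_adj_def by blast
  from pow show thesis
  proof
    assume "T2 = type_pow T1 a"
    then show thesis using linked[of T1 a] assms(1,2) a that by blast
  next
    assume "T1 = type_pow T2 a"
    then obtain X1 X2 where "(X2, X1) \<in> conn_rel (qvert G) qadj" "vtype X1 = T1" "vtype X2 = T2"
      using linked[of T2 a] assms(1,2) a by blast
    then show thesis using that conn_rel_sym[where E = qadj, OF qadj_sym] by blast
  qed
qed

end

section \<open>Conjugation by the normaliser\<close>

lemma normalizer_S_memD:
  assumes "y \<in> normalizer_S n G"
  shows "y permutes {1..n}" and "conj_perm y ` G = G"
  using assms unfolding normalizer_S_def conj_perm_def by auto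

lemma normalizer_S_inv:
  assumes "y \<in> normalizer_S n G"
  shows "inv' y \<in> normalizer_S n G"
proof -
  note y = normalizer_S_memD[OF assms]
  have "conj_perm (inv' y) ` G = conj_perm (inv' y) ` conj_perm y ` G" using y(2) by simp
  also have "\<dots> = G" using conj_perm_inv_cancel[OF y(1)] by (simp add: image_image)
  finally show ?thesis
    using permutes_inv[OF y(1)] unfolding normalizer_S_def conj_perm_def by simp
qed

context perm_subgroup
begin

context
  fixes y :: perm
  assumes y: "y \<in> normalizer_S n G"
begin

lemma conj_perm_image_cls:
  assumes "g \<in> G"
  shows "conj_perm y ` cls G g = cls G (conj_perm y g)"
proof -
  note yS = normalizer_S_memD[OF y]
  have "conj_perm y g \<in> G" using assms yS(2) by blast
  moreover have "conj_perm y ` {z. cyc z = cyc g} = {z. cyc z = cyc (conj_perm y g)}"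
  proof (intro equalityI subsetI)
    fix z assume "z \<in> {z. cyc z = cyc (conj_perm y g)}"
    then have cz: "cyc z = conj_perm y ` cyc g" using cyc_conj_perm[OF yS(1)] by simp
    then obtain w where w: "z = conj_perm y w" using self_in_cyc[of z] by auto
    then have "conj_perm y ` cyc w = conj_perm y ` cyc g"
      using cz cyc_conj_perm[OF yS(1)] by simp
    then have "cyc w = cyc g" using inj_conj_perm[OF yS(1)] by (simp add: inj_image_eq_iff)
    then show "z \<in> conj_perm y ` {z. cyc z = cyc g}" using w by blast
  qed (auto simp: cyc_conj_perm[OF yS(1)])
  ultimately show ?thesis using cls_eq assms by simp
qed

lemma conj_perm_image_qvert:
  assumes "X \<in> qvert G"
  shows "conj_perm y ` X \<in> qvert G"
proof -
  note yS = normalizer_S_memD[OF y]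
  obtain g where g: "g \<in> G" "g \<noteq> id" "X = cls G g"
    using assms unfolding qvert_def G0_def by blast
  have "conj_perm y g \<in> G" using g(1) yS(2) by blast
  moreover have "conj_perm y g \<noteq> id"
    using g(2) conj_perm_id[OF yS(1)] inj_conj_perm[OF yS(1)] by (metis injD)
  ultimately show ?thesis
    using conj_perm_image_cls[OF g(1)] g(3) unfolding qvert_def G0_def by blast
qed

lemma qadj_conj_perm_image:
  assumes "qadj X Y"
  shows "qadj (conj_perm y ` X) (conj_perm y ` Y)"
proof -
  note yS = normalizer_S_memD[OF y]
  obtain x z m where xz: "x \<in> X" "z \<in> Y" "0 < m" "x = z ^^ m \<or> z = x ^^ m" and "X \<noteq> Y"
    using assms unfolding qadj_def by blast
  then have "conj_perm y x = conj_perm y z ^^ m \<or> conj_perm y z = conj_perm y x ^^ m"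
    using conj_perm_funpow[OF yS(1)] by auto
  moreover have "conj_perm y ` X \<noteq> conj_perm y ` Y"
    using \<open>X \<noteq> Y\<close> inj_conj_perm[OF yS(1)] by (simp add: inj_image_eq_iff)
  ultimately show ?thesis unfolding qadj_def using xz(1-3) by blast
qed

lemma conn_rel_conj_perm_image:
  assumes "(X, Y) \<in> conn_rel (qvert G) qadj"
  shows "(conj_perm y ` X, conj_perm y ` Y) \<in> conn_rel (qvert G) qadj"
  using conn_rel_map[of X Y "qvert G" qadj "image (conj_perm y)" "qvert G" qadj, OF assms]
    conj_perm_image_qvert qadj_conj_perm_image by blast

lemma kC_le_of_conj_perm_image:
  assumes D: "D \<in> components (qvert G) qadj" and D': "D' \<in> components (qvert G) qadj"
    and "X0 \<in> D" and "conj_perm y ` X0 \<in> D'"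
  shows "kC n D T \<le> kC n D' T"
proof -
  note yS = normalizer_S_memD[OF y]
  have "finite D'" using components_subset[OF D'] finite_qvert by (rule finite_subset)
  moreover have "inj_on (image (conj_perm y)) {X \<in> D. \<exists>\<psi>\<in>X. ptype_of n \<psi> = T}"
    using inj_conj_perm[OF yS(1)] by (simp add: inj_on_def inj_image_eq_iff)
  moreover have "image (conj_perm y) ` {X \<in> D. \<exists>\<psi>\<in>X. ptype_of n \<psi> = T}
      \<subseteq> {X \<in> D'. \<exists>\<psi>\<in>X. ptype_of n \<psi> = T}"
  proof (intro subsetI, elim imageE CollectE conjE bexE)
    fix Z X \<psi> assume Z: "Z = conj_perm y ` X" and X: "X \<in> D" and \<psi>: "\<psi> \<in> X" "ptype_of n \<psi> = T"
    have "(X0, X) \<in> conn_rel (qvert G) qadj"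
      using mem_component_iff[where E = qadj, OF qadj_sym D \<open>X0 \<in> D\<close>] X by simp
    then have "(conj_perm y ` X0, Z) \<in> conn_rel (qvert G) qadj"
      unfolding Z by (rule conn_rel_conj_perm_image)
    then have "Z \<in> D'"
      using mem_component_iff[where E = qadj, OF qadj_sym D' \<open>conj_perm y ` X0 \<in> D'\<close>] by simp
    moreover have "conj_perm y \<psi> \<in> Z" "ptype_of n (conj_perm y \<psi>) = T"
      using Z \<psi> ptype_of_conj_perm[OF yS(1)] by auto
    ultimately show "Z \<in> {X \<in> D'. \<exists>\<psi>\<in>X. ptype_of n \<psi> = T}" by blast
  qed
  ultimately show ?thesis unfolding kC_def
    by (intro card_inj_on_le) (auto intro: finite_subset)
qed

end

end

section \<open>Counting components\<close>

context perm_subgroup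
begin

lemma type_order_pos:
  assumes "T \<in> types0 n G"
  shows "0 < type_order T"
proof -
  obtain g where "g \<in> G" "T = ptype_of n g" using assms unfolding types0_def G0_def by blast
  then show ?thesis
    using type_order_ptype_of[OF mem_permutes] cyc_period(1)[OF mem_permutes] by simp
qed

lemma mu_eq_card_qvert_of_type:
  assumes "T \<in> types0 n G"
  shows "mu n T G = card {X \<in> qvert G. vtype X = T} * totient (type_order T)"
proof -
  let ?W = "{X \<in> qvert G. vtype X = T}"
  have "{\<psi> \<in> G. ptype_of n \<psi> = T} = \<Union>?W"
  proof (intro equalityI subsetI)
    fix \<psi> assume "\<psi> \<in> {\<psi> \<in> G. ptype_of n \<psi> = T}"
    then have \<psi>: "\<psi> \<in> G" "ptype_of n \<psi> = T" by simp_all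
    then have "\<psi> \<in> G0 G" using ptype_of_in_types0_iff[OF \<psi>(1)] assms unfolding G0_def by simp
    then have "cls G \<psi> \<in> ?W" using \<psi>(2) vtype_cls unfolding qvert_def by simp
    then show "\<psi> \<in> \<Union>?W" using self_in_cls[OF \<psi>(1)] by blast
  next
    fix \<psi> assume "\<psi> \<in> \<Union>?W"
    then obtain X where "X \<in> qvert G" "vtype X = T" "\<psi> \<in> X" by blast
    then show "\<psi> \<in> {\<psi> \<in> G. ptype_of n \<psi> = T}"
      using qvert_memD vtype_eq unfolding G0_def by fastforce
  qed
  moreover have "card (\<Union>?W) = (\<Sum>X\<in>?W. card X)"
  proof (rule card_Union_disjoint)
    show "pairwise disjnt ?W"
      unfolding pairwise_def disjnt_def using qvert_memD by blast
    show "finite X" if "X \<in> ?W" for X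
      using that qvert_memD finite_G unfolding G0_def by (blast intro: finite_subset)
  qed
  moreover have "card X = totient (type_order T)" if X: "X \<in> ?W" for X
  proof -
    have Q: "X \<in> qvert G" using X by simp
    obtain g where g: "g \<in> X" using Q by (rule qvert_nonempty)
    then have "g \<in> G" "cls G g = X" using Q qvert_memD unfolding G0_def by blast+
    moreover have "ptype_of n g = T" using vtype_eq[OF Q g] X by simp
    ultimately show ?thesis using card_cls by metis
  qed
  ultimately show ?thesis unfolding mu_def by simp
qed

definition components_over :: "ptype \<Rightarrow> perm set set set" where
  "components_over T = {D \<in> components (qvert G) qadj. \<exists>X\<in>D. vtype X \<in> type_comp n G T}"

lemma type_comp_eq: "type_comp n G T = conn_rel (types0 n G) type_adj `` {T}"
  unfolding type_comp_def component_of_def ..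

lemma components_over_disjoint:
  assumes "type_comp n G T \<noteq> type_comp n G T'"
  shows "components_over T \<inter> components_over T' = {}"
proof (rule ccontr)
  assume "components_over T \<inter> components_over T' \<noteq> {}"
  then obtain D X Y where D: "D \<in> components (qvert G) qadj" "X \<in> D" "Y \<in> D"
    and "vtype X \<in> type_comp n G T" "vtype Y \<in> type_comp n G T'"
    unfolding components_over_def by blast
  then have TX: "(T, vtype X) \<in> conn_rel (types0 n G) type_adj"
    and T'Y: "(T', vtype Y) \<in> conn_rel (types0 n G) type_adj"
    unfolding type_comp_eq by simp_all
  have "(vtype X, vtype Y) \<in> conn_rel (types0 n G) type_adj"
    using mem_component_iff[where E = qadj, OF qadj_sym D(1,2)] D(3) vtype_conn_rel by blast
  with TX have "(T, vtype Y) \<in> conn_rel (types0 n G) type_adj" by (rule conn_rel_trans)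
  moreover have "(vtype Y, T') \<in> conn_rel (types0 n G) type_adj"
    by (rule conn_rel_sym[where E = type_adj, OF type_adj_sym T'Y])
  ultimately have "(T, T') \<in> conn_rel (types0 n G) type_adj" by (rule conn_rel_trans)
  then show False
    using assms equiv_class_eq[OF equiv_conn_rel[where E = type_adj, OF type_adj_sym]]
    unfolding type_comp_eq by simp
qed

lemma components_qvert_eq_UN:
  assumes "\<forall>i\<in>I. T i \<in> types0 n G"
    and "(\<lambda>i. type_comp n G (T i)) ` I = components (types0 n G) type_adj"
  shows "components (qvert G) qadj = (\<Union>i\<in>I. components_over (T i))"
proof (intro equalityI subsetI)
  fix D assume D: "D \<in> components (qvert G) qadj"
  then obtain X where X: "X \<in> D" by (rule components_nonempty)
  then have vX: "vtype X \<in> types0 n G"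
    using components_subset[OF D] vtype_in_types0 by blast
  then have "type_comp n G (vtype X) \<in> components (types0 n G) type_adj"
    unfolding type_comp_def by (rule component_of_in_components)
  then have "type_comp n G (vtype X) \<in> (\<lambda>i. type_comp n G (T i)) ` I"
    by (simp only: assms(2))
  then obtain i where i: "i \<in> I" "type_comp n G (vtype X) = type_comp n G (T i)" by blast
  have "vtype X \<in> type_comp n G (vtype X)"
    unfolding type_comp_def using vX by (rule self_in_component_of)
  then have "D \<in> components_over (T i)" using D X unfolding components_over_def i(2) by blast
  then show "D \<in> (\<Union>i\<in>I. components_over (T i))" using i(1) by blast
qed (simp add: components_over_def)

lemma card_components_qvert_eq_sum:
  assumes "finite I" and "\<forall>i\<in>I. T i \<in> types0 n G"
    and "bij_betw (\<lambda>i. type_comp n G (T i)) I (components (types0 n G) type_adj)"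
  shows "card (components (qvert G) qadj) = (\<Sum>i\<in>I. card (components_over (T i)))"
  unfolding components_qvert_eq_UN[OF assms(2) bij_betw_imp_surj_on[OF assms(3)]]
proof (rule card_UN_disjoint[OF assms(1)])
  show "\<forall>i\<in>I. finite (components_over (T i))"
    using finite_components[OF finite_qvert] unfolding components_over_def by simp
  show "\<forall>i\<in>I. \<forall>j\<in>I. i \<noteq> j \<longrightarrow> components_over (T i) \<inter> components_over (T j) = {}"
  proof (intro ballI impI)
    fix i j assume "i \<in> I" "j \<in> I" "i \<noteq> j"
    then have "type_comp n G (T i) \<noteq> type_comp n G (T j)"
      using bij_betw_imp_inj_on[OF assms(3)] by (auto dest: inj_onD)
    then show "components_over (T i) \<inter> components_over (T j) = {}" by (rule components_over_disjoint)
  qed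
qed

lemma bij_betw_type_comp_representatives:
  assumes "\<forall>i\<in>{1..c0_types n G}. T i \<in> types0 n G"
    and "\<forall>i\<in>{1..c0_types n G}. \<forall>j\<in>{1..c0_types n G}.
           i \<noteq> j \<longrightarrow> type_comp n G (T i) \<noteq> type_comp n G (T j)"
  shows "bij_betw (\<lambda>i. type_comp n G (T i)) {1..c0_types n G} (components (types0 n G) type_adj)"
proof -
  let ?I = "{1..c0_types n G}" and ?tc = "\<lambda>i. type_comp n G (T i)"
  have "?tc ` ?I \<subseteq> components (types0 n G) type_adj"
    using assms(1) unfolding type_comp_def by (auto intro: component_of_in_components)
  moreover have inj: "inj_on ?tc ?I" using assms(2) unfolding inj_on_def by blast
  moreover have "finite (components (types0 n G) type_adj)"
    using finite_G unfolding types0_def G0_def by (simp add: finite_components)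
  ultimately have "?tc ` ?I = components (types0 n G) type_adj"
    by (intro card_subset_eq) (simp_all add: card_image c0_types_def)
  with inj show ?thesis unfolding bij_betw_def by simp
qed

lemma qvert_of_type_eq_UN:
  assumes T: "T \<in> types0 n G"
  shows "{X \<in> qvert G. vtype X = T} = (\<Union>D\<in>components_over T. {X \<in> D. vtype X = T})"
proof (intro equalityI subsetI)
  fix X assume X: "X \<in> {X \<in> qvert G. vtype X = T}"
  let ?D = "component_of (qvert G) qadj X"
  have "?D \<in> components (qvert G) qadj" "X \<in> ?D"
    using X by (simp_all add: component_of_in_components self_in_component_of)
  moreover have "vtype X \<in> type_comp n G T"
    using X self_in_component_of[OF T] unfolding type_comp_def by simp
  ultimately have "?D \<in> components_over T" unfolding components_over_def by blast
  then show "X \<in> (\<Union>D\<in>components_over T. {X \<in> D. vtype X = T})" using X \<open>X \<in> ?D\<close> by blast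
next
  fix X assume "X \<in> (\<Union>D\<in>components_over T. {X \<in> D. vtype X = T})"
  then show "X \<in> {X \<in> qvert G. vtype X = T}"
    using components_subset unfolding components_over_def by blast
qed

lemma card_qvert_of_type_eq_sum:
  assumes "T \<in> types0 n G"
  shows "card {X \<in> qvert G. vtype X = T} = (\<Sum>D\<in>components_over T. card {X \<in> D. vtype X = T})"
  unfolding qvert_of_type_eq_UN[OF assms]
proof (rule card_UN_disjoint)
  show "finite (components_over T)"
    using finite_components[OF finite_qvert] unfolding components_over_def by simp
  show "\<forall>D\<in>components_over T. finite {X \<in> D. vtype X = T}"
  proof
    fix D assume "D \<in> components_over T"
    then have "{X \<in> D. vtype X = T} \<subseteq> qvert G"
      using components_subset unfolding components_over_def by blast
    then show "finite {X \<in> D. vtype X = T}" using finite_qvert by (rule finite_subset)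
  qed
  show "\<forall>D1\<in>components_over T. \<forall>D2\<in>components_over T. D1 \<noteq> D2 \<longrightarrow>
      {X \<in> D1. vtype X = T} \<inter> {X \<in> D2. vtype X = T} = {}"
  proof (intro ballI impI)
    fix D1 D2 assume D: "D1 \<in> components_over T" "D2 \<in> components_over T" "D1 \<noteq> D2"
    show "{X \<in> D1. vtype X = T} \<inter> {X \<in> D2. vtype X = T} = {}"
    proof (rule ccontr)
      assume "{X \<in> D1. vtype X = T} \<inter> {X \<in> D2. vtype X = T} \<noteq> {}"
      then obtain X where "X \<in> D1" "X \<in> D2" by blast
      then have "D1 = D2"
        using components_eqI[where E = qadj, OF qadj_sym] D(1,2) unfolding components_over_def by blast
      then show False using D(3) by simp
    qed
  qed
qed

end

locale fusion_controlled_subgroup = perm_subgroup +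
  assumes fusion_controlled: "fusion_controlled n G"
begin

lemma kC_eq_if_vtype_eq:
  assumes D1: "D1 \<in> components (qvert G) qadj" and D2: "D2 \<in> components (qvert G) qadj"
    and X1: "X1 \<in> D1" and X2: "X2 \<in> D2" and "vtype X1 = vtype X2"
  shows "kC n D1 T = kC n D2 T"
proof -
  have Q: "X1 \<in> qvert G" "X2 \<in> qvert G"
    using components_subset D1 D2 X1 X2 by blast+
  obtain g1 where g1: "g1 \<in> X1" using Q(1) by (rule qvert_nonempty)
  obtain g2 where g2: "g2 \<in> X2" using Q(2) by (rule qvert_nonempty)
  have G: "g1 \<in> G" "cls G g1 = X1" "g2 \<in> G" "cls G g2 = X2"
    using qvert_memD Q g1 g2 unfolding G0_def by blast+
  have "ptype_of n g1 = ptype_of n g2" using vtype_eq Q g1 g2 assms(5) by simp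
  then obtain \<sigma> where \<sigma>: "\<sigma> permutes {1..n}" "conj_perm \<sigma> g1 = g2"
    using conjugate_if_ptype_of_eq[OF mem_permutes[OF G(1)] mem_permutes[OF G(3)]] by blast
  then have "inv' \<sigma> \<circ> g1 \<circ> \<sigma> \<in> G" using G(3) unfolding conj_perm_def by simp
  then have "\<exists>y\<in>normalizer_S n G. inv' \<sigma> \<circ> g1 \<circ> \<sigma> = inv' y \<circ> g1 \<circ> y"
    using fusion_controlled G(1) \<sigma>(1) unfolding fusion_controlled_def by blast
  then obtain y where y: "y \<in> normalizer_S n G" "conj_perm y g1 = g2"
    using \<sigma>(2) unfolding conj_perm_def by auto
  have image_X1: "conj_perm y ` X1 = X2"
    using conj_perm_image_cls[OF y(1) G(1)] G(2,4) y(2) by simp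
  then have image_X2: "conj_perm (inv' y) ` X2 = X1"
    using conj_perm_inv_cancel[OF normalizer_S_memD(1)[OF y(1)]] by (auto simp: image_image)
  have "kC n D1 T \<le> kC n D2 T"
    using kC_le_of_conj_perm_image[OF y(1) D1 D2 X1] image_X1 X2 by simp
  moreover have "kC n D2 T \<le> kC n D1 T"
    using kC_le_of_conj_perm_image[OF normalizer_S_inv[OF y(1)] D2 D1 X2] image_X2 X1 by simp
  ultimately show ?thesis by simp
qed

lemma kC_eq_if_vtype_conn:
  assumes "(vtype X1, vtype X2) \<in> conn_rel (types0 n G) type_adj"
    and D1: "D1 \<in> components (qvert G) qadj" and D2: "D2 \<in> components (qvert G) qadj"
    and X1: "X1 \<in> D1" and X2: "X2 \<in> D2"
  shows "kC n D1 T = kC n D2 T"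
proof -
  have "\<forall>D\<in>components (qvert G) qadj. \<forall>X\<in>D. vtype X = T' \<longrightarrow> kC n D1 T = kC n D T"
    if "(vtype X1, T') \<in> conn_rel (types0 n G) type_adj" for T'
    using that
  proof (induction rule: conn_rel_induct)
    case refl
    show ?case
    proof (intro ballI impI)
      fix D X assume "D \<in> components (qvert G) qadj" "X \<in> D" "vtype X = vtype X1"
      then show "kC n D1 T = kC n D T" using kC_eq_if_vtype_eq[OF D1 _ X1] by simp
    qed
  next
    case (step T' T'')
    obtain Y1 Y2 where Y: "(Y1, Y2) \<in> conn_rel (qvert G) qadj" "vtype Y1 = T'" "vtype Y2 = T''"
      using adjacent_types_linked[OF step.hyps(2-4)] .
    define E where "E = component_of (qvert G) qadj Y1"
    have "Y1 \<in> qvert G" using Y(1) conn_rel_subset by blast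
    then have E: "E \<in> components (qvert G) qadj" "Y1 \<in> E"
      unfolding E_def by (rule component_of_in_components, rule self_in_component_of)
    have "Y2 \<in> E" using mem_component_iff[where E = qadj, OF qadj_sym E] Y(1) by simp
    have "kC n D1 T = kC n E T" using step.IH E Y(2) by blast
    show ?case
    proof (intro ballI impI)
      fix D X assume "D \<in> components (qvert G) qadj" "X \<in> D" "vtype X = T''"
      then have "kC n E T = kC n D T" using kC_eq_if_vtype_eq[OF E(1) _ \<open>Y2 \<in> E\<close>] Y(3) by simp
      with \<open>kC n D1 T = kC n E T\<close> show "kC n D1 T = kC n D T" by simp
    qed
  qed
  from this[OF assms(1)] show ?thesis using D2 X2 by blast
qed

lemma mu_eq_card_components_over:
  assumes T: "T \<in> types0 n G" and C: "C \<in> components (qvert G) qadj"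
    and "\<exists>X\<in>C. \<exists>\<psi>\<in>X. ptype_of n \<psi> = T"
  shows "mu n T G = card (components_over T) * kC n C T * totient (type_order T)"
proof -
  obtain X0 \<psi> where X0: "X0 \<in> C" "\<psi> \<in> X0" "ptype_of n \<psi> = T" using assms(3) by blast
  then have "vtype X0 = T" using vtype_eq components_subset[OF C] by blast
  have "card {X \<in> D. vtype X = T} = kC n C T" if D_over: "D \<in> components_over T" for D
  proof -
    obtain X where D: "D \<in> components (qvert G) qadj" "X \<in> D" "vtype X \<in> type_comp n G T"
      using D_over unfolding components_over_def by blast
    then have "kC n C T = kC n D T"
      using kC_eq_if_vtype_conn[OF _ C D(1) X0(1) D(2)] \<open>vtype X0 = T\<close>
      unfolding type_comp_eq by simp
    then show ?thesis using kC_eq_card_vtype[OF components_subset[OF D(1)]] by simp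
  qed
  then show ?thesis
    using mu_eq_card_qvert_of_type[OF T] card_qvert_of_type_eq_sum[OF T] by simp
qed

lemma card_components_over_eq:
  assumes T: "T \<in> types0 n G" and C: "C \<in> components (qvert G) qadj"
    and C_T: "\<exists>X\<in>C. \<exists>\<psi>\<in>X. ptype_of n \<psi> = T"
  shows "real (card (components_over T))
           = real (mu n T G) / (real (totient (type_order T)) * real (kC n C T))"
proof -
  have "finite C" using components_subset[OF C] finite_qvert by (rule finite_subset)
  then have "0 < kC n C T" using C_T unfolding kC_def by (auto simp: card_gt_0_iff)
  moreover have "0 < totient (type_order T)" using type_order_pos[OF T] by simp
  ultimately show ?thesis using mu_eq_card_components_over[OF assms] by (simp add: field_simps)
qed

end

theorem theoremA:
  fixes n :: nat and G :: "perm set"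
    and T :: "nat \<Rightarrow> ptype" and C :: "nat \<Rightarrow> perm set set"
  assumes "n \<ge> 2"
    and "subgroup G (sym_group n)"
    and "fusion_controlled n G"
    and "\<forall>i\<in>{1..c0_types n G}. T i \<in> types0 n G"
    and "\<forall>i\<in>{1..c0_types n G}. \<forall>j\<in>{1..c0_types n G}.
           i \<noteq> j \<longrightarrow> type_comp n G (T i) \<noteq> type_comp n G (T j)"
    and "\<forall>i\<in>{1..c0_types n G}. C i \<in> components (qvert G) qadj \<and>
           (\<exists>X\<in>C i. \<exists>\<psi>\<in>X. ptype_of n \<psi> = T i)"
  shows "real (c0 G) =
    (\<Sum>i = 1..c0_types n G.
       real (mu n (T i) G) / (real (totient (type_order (T i))) * real (kC n (C i) (T i))))"
proof -
  interpret fusion_controlled_subgroup n G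
    using assms(2,3) by (simp add: fusion_controlled_subgroup_def perm_subgroup_def
        fusion_controlled_subgroup_axioms_def)
  have "real (c0 G) = (\<Sum>i = 1..c0_types n G. real (card (components_over (T i))))"
    using c0_eq_card_components_qvert assms(4)
      card_components_qvert_eq_sum[OF _ _ bij_betw_type_comp_representatives[OF assms(4,5)]]
    by simp
  also have "\<dots> = (\<Sum>i = 1..c0_types n G.
       real (mu n (T i) G) / (real (totient (type_order (T i))) * real (kC n (C i) (T i))))"
    using assms(4,6) card_components_over_eq by (intro sum.cong) simp_all
  finally show ?thesis .
qed

end
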